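(* Let $X=\bigcup_{n\ge1}X_n$ be a positively graded set. The space $K[\mathcal K_\infty,X]=\bigoplus_{n\ge1}K[\mathcal K_{n,X}]$ with the operations $\bullet_i$ described in the context is a preshuffle algebra, and it is the free preshuffle algebra on $X$: for every preshuffle algebra $A$ and every map $\varphi:X\to A$ with $\varphi(X_n)\subseteq A_n$, there is a unique degree-preserving linear map $\Phi:K[\mathcal K_\infty,X]\to A$ with $\Phi(u\bullet_iv)=\Phi(u)\bullet_i\Phi(v)$ for all $u,v,i$ and $\Phi(\xi_n;x)=\varphi(x)$ for $x\in X_n$.
   Context: A preshuffle algebra is a graded vector space $A=\bigoplus_{n\ge0}A_n$ over a field $K$ with linear maps $\bullet_i:A_n\otimes A_m\to A_{n+m}$ for all $n,m\ge0$ and $0\le i\le m$, such that $(x\bullet_iy)\bullet_jz=x\bullet_{i+j}(y\bullet_jz)$ for all homogeneous $x,y,z$, $0\le i\le|y|$, $0\le j\le|z|$ ($|\cdot|$ denotes degree). $\mathcal K_n$ is the set of surjective maps $f:\{1,\dots,n\}\to\{1,\dots,r\}$ ($1\le r\le n$), written $(f(1),\dots,f(n))$, such that whenever $f(i)=f(j)$ with $i<j$, one has $f(k)\le f(i)$ for all $i\le k\le j$. $\mathcal K_{n,X}$ is the set of tuples $(f;x_1,\dots,x_r)$ with $f\in\mathcal K_n$ having image $\{1..r\}$ and $x_l\in X_{|f^{-1}(l)|}$; it has degree $n$. For $(f;x_1,\dots,x_r)\in\mathcal K_{n,X}$, $(g;y_1,\dots,y_k)\in\mathcal K_{m,X}$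 and $0\le i\le m$: $(f;x_1..x_r)\bullet_i(g;y_1..y_k)=((g(1)+r,\dots,g(i)+r,f(1),\dots,f(n),g(i+1)+r,\dots,g(m)+r);x_1,\dots,x_r,y_1,\dots,y_k)$. $\xi_n$ denotes the constant map $\{1,\dots,n\}\to\{1\}$. *)

theory Defs
  imports Main "HOL-Library.Function_Algebras"
begin

text \<open>(The first four conjuncts are the vector space axioms, i.e. the
  assumptions of the library locale vector_space.)  A graded vector space over the field 'k is given inside an ambient
  vector space (type 'a with scalar multiplication scale) by a family of
  subspaces G n (the homogeneous components A_n); the space itself is the
  internal direct sum of the G n, i.e. the set of finite sums of homogeneous
  elements, and the sum is required to be direct.\<close>

definition gcarrier :: "(nat \<Rightarrow> 'a::ab_group_add set) \<Rightarrow> 'a set" where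
  "gcarrier G = {(\<Sum>n\<in>S. c n) | S c. finite S \<and> (\<forall>n\<in>S. c n \<in> G n)}"

definition graded_vs ::
  "('k::field \<Rightarrow> 'a::ab_group_add \<Rightarrow> 'a) \<Rightarrow> (nat \<Rightarrow> 'a set) \<Rightarrow> bool" where
  "graded_vs scale G \<longleftrightarrow>
     (\<forall>a x y. scale a (x + y) = scale a x + scale a y) \<and>
     (\<forall>a b x. scale (a + b) x = scale a x + scale b x) \<and>
     (\<forall>a b x. scale a (scale b x) = scale (a * b) x) \<and>
     (\<forall>x. scale 1 x = x) \<and>
     (\<forall>n. 0 \<in> G n \<and> (\<forall>x\<in>G n. \<forall>y\<in>G n. x + y \<in> G n) \<and>
            (\<forall>c. \<forall>x\<in>G n. scale c x \<in> G n)) \<and>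
     (\<forall>S c d. finite S \<and> (\<forall>n\<in>S. c n \<in> G n \<and> d n \<in> G n) \<and>
        (\<Sum>n\<in>S. c n) = (\<Sum>n\<in>S. d n) \<longrightarrow> (\<forall>n\<in>S. c n = d n))"

text \<open>bul i x y stands for x \<bullet>_i y; it is only required to be meaningful
  for homogeneous x of degree n, y of degree m and i \<le> m.\<close>

definition preshuffle_algebra ::
  "('k::field \<Rightarrow> 'a::ab_group_add \<Rightarrow> 'a) \<Rightarrow> (nat \<Rightarrow> 'a set) \<Rightarrow> (nat \<Rightarrow> 'a \<Rightarrow> 'a \<Rightarrow> 'a) \<Rightarrow> bool" where
  "preshuffle_algebra scale G bul \<longleftrightarrow>
     graded_vs scale G \<and>
     (\<forall>n m i x y. x \<in> G n \<longrightarrow> y \<in> G m \<longrightarrow> i \<le> m \<longrightarrow> bul i x y \<in> G (n + m)) \<and>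
     (\<forall>n m i x x' y. x \<in> G n \<longrightarrow> x' \<in> G n \<longrightarrow> y \<in> G m \<longrightarrow> i \<le> m \<longrightarrow>
        bul i (x + x') y = bul i x y + bul i x' y) \<and>
     (\<forall>n m i x y y'. x \<in> G n \<longrightarrow> y \<in> G m \<longrightarrow> y' \<in> G m \<longrightarrow> i \<le> m \<longrightarrow>
        bul i x (y + y') = bul i x y + bul i x y') \<and>
     (\<forall>n m i c x y. x \<in> G n \<longrightarrow> y \<in> G m \<longrightarrow> i \<le> m \<longrightarrow>
        bul i (scale c x) y = scale c (bul i x y) \<and> bul i x (scale c y) = scale c (bul i x y)) \<and>
     (\<forall>n m p i j x y z. x \<in> G n \<longrightarrow> y \<in> G m \<longrightarrow> z \<in> G p \<longrightarrow> i \<le> m \<longrightarrow> j \<le> p \<longrightarrow>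
        bul j (bul i x y) z = bul (i + j) x (bul j y z))"

text \<open>A map f : {1..n} \<rightarrow> {1..r} is the list [f(1),...,f(n)] (0-indexed list
  positions k correspond to arguments k+1).\<close>

definition in_K :: "nat \<Rightarrow> nat \<Rightarrow> nat list \<Rightarrow> bool" where
  "in_K n r f \<longleftrightarrow> length f = n \<and> 1 \<le> r \<and> r \<le> n \<and> set f = {1..r} \<and>
     (\<forall>i j k. i < j \<and> j < n \<and> f ! i = f ! j \<and> i \<le> k \<and> k \<le> j \<longrightarrow> f ! k \<le> f ! i)"

text \<open>Elements of K_{n,X}: pairs (f, [x_1,...,x_r]) with x_l \<in> X of degree
  |f^{-1}(l)|.  The set X is graded by dX (X_n = {x\<in>X. dX x = n}).\<close>

definition KX :: "'x set \<Rightarrow> ('x \<Rightarrow> nat) \<Rightarrow> nat \<Rightarrow> (nat list \<times> 'x list) set" where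
  "KX X dX n = {(f, xs). in_K n (length xs) f \<and>
      (\<forall>l < length xs. xs ! l \<in> X \<and> dX (xs ! l) = length (filter (\<lambda>v. v = Suc l) f))}"

definition bbul :: "nat \<Rightarrow> nat list \<times> 'x list \<Rightarrow> nat list \<times> 'x list \<Rightarrow> nat list \<times> 'x list" where
  "bbul i a b = (let (f, xs) = a; (g, ys) = b; r = length xs in
     (map (\<lambda>v. v + r) (take i g) @ f @ map (\<lambda>v. v + r) (drop i g), xs @ ys))"

text \<open>The free vector space K[B] is realised as finitely supported functions
  B \<Rightarrow> 'k with pointwise operations.\<close>

definition fscale :: "'k::field \<Rightarrow> ('b \<Rightarrow> 'k) \<Rightarrow> ('b \<Rightarrow> 'k)" where
  "fscale c u = (\<lambda>b. c * u b)"

text \<open>Homogeneous component of degree n of K[K_\<infinity>,X] = \<Oplus>_{n\<ge>1} K[K_{n,X}]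
  (empty basis, hence zero, for n = 0).\<close>

definition FG :: "'x set \<Rightarrow> ('x \<Rightarrow> nat) \<Rightarrow> nat \<Rightarrow> (nat list \<times> 'x list \<Rightarrow> 'k::field) set" where
  "FG X dX n = {u. finite {b. u b \<noteq> 0} \<and> (\<forall>b. u b \<noteq> 0 \<longrightarrow> b \<in> KX X dX n)}"

definition fbul :: "nat \<Rightarrow> (nat list \<times> 'x list \<Rightarrow> 'k::field) \<Rightarrow> (nat list \<times> 'x list \<Rightarrow> 'k)
    \<Rightarrow> (nat list \<times> 'x list \<Rightarrow> 'k)" where
  "fbul i u v = (\<lambda>b. \<Sum>(a, c)\<in>{(a, c). u a \<noteq> 0 \<and> v c \<noteq> 0 \<and> bbul i a c = b}. u a * v c)"

definition gen :: "('x \<Rightarrow> nat) \<Rightarrow> 'x \<Rightarrow> (nat list \<times> 'x list \<Rightarrow> 'k::field)" where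
  "gen dX x = (\<lambda>b. if b = (replicate (dX x) 1, [x]) then 1 else 0)"

definition free_hom ::
  "'x set \<Rightarrow> ('x \<Rightarrow> nat) \<Rightarrow> ('k::field \<Rightarrow> 'a::ab_group_add \<Rightarrow> 'a) \<Rightarrow> (nat \<Rightarrow> 'a set)
    \<Rightarrow> (nat \<Rightarrow> 'a \<Rightarrow> 'a \<Rightarrow> 'a) \<Rightarrow> ('x \<Rightarrow> 'a) \<Rightarrow> ((nat list \<times> 'x list \<Rightarrow> 'k) \<Rightarrow> 'a) \<Rightarrow> bool" where
  "free_hom X dX scale G bul phi Phi \<longleftrightarrow>
     (\<forall>n. \<forall>u\<in>FG X dX n. Phi u \<in> G n) \<and>
     (\<forall>u\<in>gcarrier (FG X dX). \<forall>v\<in>gcarrier (FG X dX). Phi (u + v) = Phi u + Phi v) \<and>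
     (\<forall>c. \<forall>u\<in>gcarrier (FG X dX). Phi (fscale c u) = scale c (Phi u)) \<and>
     (\<forall>n m i u v. u \<in> FG X dX n \<longrightarrow> v \<in> FG X dX m \<longrightarrow> i \<le> m \<longrightarrow>
        Phi (fbul i u v) = bul i (Phi u) (Phi v)) \<and>
     (\<forall>x\<in>X. Phi (gen dX x) = phi x)"

end

theory Submission
  imports Defs HOL.Modules
begin

(* Every basis element (f; x_1, ..., x_r) with r \<ge> 2 factors as (\<xi>_d; x_1) \<bullet>_j (f'; x_2, ..., x_r):
   since 1 is the least value of f and between two equal values of f only smaller ones occur, the
   entries 1 of f form a single block; its length d is the degree of x_1, j is the number of entries
   before it, and f' is f with the block removed and all other values lowered by one.  Hence the
   basis is generated by the elements (\<xi>_n; x) under the operations \<bullet>_j, which gives uniqueness,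
   and recursion along the factorisation evaluates basis elements in any preshuffle algebra.  The
   preshuffle identity of the target makes this evaluation compatible with every \<bullet>_i, and its
   linear extension is the required morphism.  The operations on K[K_\<infinity>, X] satisfy the preshuffle
   identity because they do on basis elements, where it is an identity between lists. *)

section \<open>Combinatorics of the basis\<close>

lemma bbul_Pair:
  "bbul i (f, xs) (g, ys) =
     (map (\<lambda>v. v + length xs) (take i g) @ f @ map (\<lambda>v. v + length xs) (drop i g), xs @ ys)"
  by (simp add: bbul_def Let_def)

lemma bbul_assoc:
  assumes "i \<le> length (fst b)" "j \<le> length (fst c)"
  shows "bbul j (bbul i a b) c = bbul (i + j) a (bbul j b c)"
proof -
  obtain f xs g ys h zs where "a = (f, xs)" "b = (g, ys)" "c = (h, zs)"
    by (cases a, cases b, cases c)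
  with assms show ?thesis
    by (simp add: bbul_Pair take_append drop_append map_map o_def ac_simps min_def)
qed

definition lower_between :: "nat list \<Rightarrow> bool" where
  "lower_between L \<longleftrightarrow> (\<forall>p q t. p \<le> t \<and> t \<le> q \<and> q < length L \<and> L ! p = L ! q \<longrightarrow> L ! t \<le> L ! p)"

lemma lower_between_iff_strict:
  "lower_between L \<longleftrightarrow>
     (\<forall>p q t. p < q \<and> q < length L \<and> L ! p = L ! q \<and> p \<le> t \<and> t \<le> q \<longrightarrow> L ! t \<le> L ! p)"
  unfolding lower_between_def
proof (intro iffI allI impI)
  fix p q t
  assume "\<forall>p q t. p \<le> t \<and> t \<le> q \<and> q < length L \<and> L ! p = L ! q \<longrightarrow> L ! t \<le> L ! p"
    and "p < q \<and> q < length L \<and> L ! p = L ! q \<and> p \<le> t \<and> t \<le> q"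
  then show "L ! t \<le> L ! p" by blast
next
  fix p q t
  assume strict: "\<forall>p q t. p < q \<and> q < length L \<and> L ! p = L ! q \<and> p \<le> t \<and> t \<le> q \<longrightarrow> L ! t \<le> L ! p"
    and pqt: "p \<le> t \<and> t \<le> q \<and> q < length L \<and> L ! p = L ! q"
  show "L ! t \<le> L ! p"
  proof (cases "p = q")
    case True
    then have "t = p" using pqt by simp
    then show ?thesis by simp
  next
    case False
    then have "p < q" using pqt by simp
    then show ?thesis using strict pqt by blast
  qed
qed

lemma in_K_iff:
  "in_K n r f \<longleftrightarrow> length f = n \<and> 1 \<le> r \<and> r \<le> n \<and> set f = {1..r} \<and> lower_between f"
  unfolding in_K_def lower_between_iff_strict by blast

lemma lower_betweenD:
  assumes "lower_between (A @ v # B @ v # C)" "w \<in> set B"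
  shows "w \<le> v"
proof -
  obtain k where k: "k < length B" "B ! k = w" using assms(2) by (metis in_set_conv_nth)
  have "(A @ v # B @ v # C) ! (length A + Suc k) \<le> (A @ v # B @ v # C) ! length A"
    using assms(1) k unfolding lower_between_def
    by (elim allE[of _ "length A"] allE[of _ "length A + Suc (length B)"] allE[of _ "length A + Suc k"])
       (simp add: nth_append)
  with k show ?thesis by (simp add: nth_append)
qed

lemma lower_between_map:
  assumes "lower_between L" "mono h" "inj_on h (set L)"
  shows "lower_between (map h L)"
  unfolding lower_between_def
proof (intro allI impI)
  fix p q t assume pqt: "p \<le> t \<and> t \<le> q \<and> q < length (map h L) \<and> map h L ! p = map h L ! q"
  then have "L ! p = L ! q"
    using assms(3) by (auto simp: inj_on_eq_iff)
  then have "L ! t \<le> L ! p"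
    using assms(1) pqt unfolding lower_between_def by auto
  then have "h (L ! t) \<le> h (L ! p)"
    using assms(2) by (simp add: monoD)
  then show "map h L ! t \<le> map h L ! p"
    using pqt by (metis le_less_trans length_map nth_map)
qed

lemma lower_between_remove_block:
  assumes "lower_between (A @ F @ B)"
  shows "lower_between (A @ B)"
  unfolding lower_between_def
proof (intro allI impI)
  define e where "e s = (if s < length A then s else s + length F)" for s
  have nth_e: "(A @ B) ! s = (A @ F @ B) ! e s" "e s < length (A @ F @ B)"
    if "s < length (A @ B)" for s
    using that by (auto simp: e_def nth_append intro!: arg_cong[where f="(!) B"])
  fix p q t assume pqt: "p \<le> t \<and> t \<le> q \<and> q < length (A @ B) \<and> (A @ B) ! p = (A @ B) ! q"
  then have "p < length (A @ B)" "t < length (A @ B)" by linarith+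
  moreover have "e p \<le> e t" "e t \<le> e q" using pqt by (auto simp: e_def)
  ultimately have "(A @ F @ B) ! e t \<le> (A @ F @ B) ! e p"
    using assms pqt nth_e unfolding lower_between_def by metis
  then show "(A @ B) ! t \<le> (A @ B) ! p"
    using nth_e(1) \<open>p < length (A @ B)\<close> \<open>t < length (A @ B)\<close> by simp
qed

lemma lower_between_insert_block:
  assumes AB: "lower_between (A @ B)" and F: "lower_between F"
    and below: "\<forall>v\<in>set F. \<forall>w\<in>set (A @ B). v < w"
  shows "lower_between (A @ F @ B)"
  unfolding lower_between_def
proof (intro allI impI)
  let ?L = "A @ F @ B"
  define inF where "inF s \<longleftrightarrow> length A \<le> s \<and> s < length A + length F" for s
  define e where "e s = (if s < length A then s else s - length F)" for s
  have nth_F: "?L ! s = F ! (s - length A)" "s - length A < length F" if "inF s" for s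
    using that by (auto simp: inF_def nth_append)
  have nth_AB: "?L ! s = (A @ B) ! e s" "e s < length (A @ B)"
    if "\<not> inF s" "s < length ?L" for s
    using that by (auto simp: inF_def e_def nth_append intro!: arg_cong[where f="(!) B"])
  have small: "?L ! s < ?L ! s'" if "inF s" "\<not> inF s'" "s' < length ?L" for s s'
    using below nth_F[OF that(1)] nth_AB[OF that(2,3)] nth_mem[of "s - length A" F]
      nth_mem[of "e s'" "A @ B"] by simp
  fix p q t assume pqt: "p \<le> t \<and> t \<le> q \<and> q < length ?L \<and> ?L ! p = ?L ! q"
  then have p: "p < length ?L" and t: "t < length ?L" by linarith+
  show "?L ! t \<le> ?L ! p"
  proof (cases "inF p")
    case True
    then have "inF q" using small[of p q] pqt by auto
    then have "inF t" using True pqt by (auto simp: inF_def)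
    have "p - length A \<le> t - length A" "t - length A \<le> q - length A"
      using pqt by (auto intro: diff_le_mono)
    then have "F ! (t - length A) \<le> F ! (p - length A)"
      using F pqt nth_F[OF True] nth_F[OF \<open>inF q\<close>] unfolding lower_between_def by metis
    then show ?thesis using nth_F(1)[OF True] nth_F(1)[OF \<open>inF t\<close>] by simp
  next
    case False
    then have "\<not> inF q" using small[of q p] pqt p by auto
    show ?thesis
    proof (cases "inF t")
      case True
      then show ?thesis using small[OF True False p] by simp
    next
      case False
      have "e p \<le> e t" "e t \<le> e q"
        using pqt \<open>\<not> inF p\<close> \<open>\<not> inF q\<close> False by (auto simp: e_def inF_def)
      moreover have "(A @ B) ! e p = (A @ B) ! e q" "e q < length (A @ B)"
        using pqt nth_AB[OF \<open>\<not> inF p\<close> p] nth_AB[OF \<open>\<not> inF q\<close>] by auto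
      ultimately have "(A @ B) ! e t \<le> (A @ B) ! e p"
        using AB unfolding lower_between_def by blast
      then show ?thesis
        using nth_AB(1)[OF \<open>\<not> inF p\<close> p] nth_AB(1)[OF False t] by simp
    qed
  qed
qed

lemma in_K_graft:
  assumes f: "in_K n r f" and g: "in_K m k g" and i: "i \<le> m"
  shows "in_K (n + m) (r + k) (map (\<lambda>v. v + r) (take i g) @ f @ map (\<lambda>v. v + r) (drop i g))"
proof -
  let ?A = "map (\<lambda>v. v + r) (take i g)" and ?B = "map (\<lambda>v. v + r) (drop i g)"
  have fK: "length f = n" "1 \<le> r" "r \<le> n" "set f = {1..r}" "lower_between f"
    using f by (simp_all add: in_K_iff)
  have gK: "length g = m" "1 \<le> k" "k \<le> m" "set g = {1..k}" "lower_between g"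
    using g by (simp_all add: in_K_iff)
  have AB: "?A @ ?B = map (\<lambda>v. v + r) g"
    by (metis append_take_drop_id map_append)
  have "lower_between (?A @ ?B)"
    unfolding AB using gK(5) by (rule lower_between_map) (auto simp: mono_def)
  moreover have "\<forall>v\<in>set f. \<forall>w\<in>set (?A @ ?B). v < w"
    using fK(4) gK(4) unfolding AB by auto
  ultimately have "lower_between (?A @ f @ ?B)"
    using fK(5) lower_between_insert_block by blast
  moreover have "set (?A @ f @ ?B) = {1..r + k}"
  proof -
    have "set (?A @ f @ ?B) = set f \<union> set (?A @ ?B)" by auto
    also have "\<dots> = {1..r} \<union> (\<lambda>v. v + r) ` {1..k}" by (simp only: AB set_map fK(4) gK(4))
    also have "\<dots> = {1..r + k}" by auto
    finally show ?thesis .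
  qed
  ultimately show ?thesis using fK gK i by (simp add: in_K_iff)
qed

lemma length_filter_graft:
  assumes "set f \<subseteq> {1..r}" "0 \<notin> set g"
  shows "length (filter (\<lambda>v. v = Suc l) (map (\<lambda>v. v + r) (take i g) @ f @ map (\<lambda>v. v + r) (drop i g))) =
    (if l < r then length (filter (\<lambda>v. v = Suc l) f) else length (filter (\<lambda>v. v = Suc (l - r)) g))"
proof (cases "l < r")
  case True
  have "v + r \<noteq> Suc l" if "v \<in> set g" for v
  proof -
    have "v \<noteq> 0" by (metis that assms(2))
    then show ?thesis using True by linarith
  qed
  then have "filter (\<lambda>v. v = Suc l) (map (\<lambda>v. v + r) L) = []" if "set L \<subseteq> set g" for L
    using that by (auto simp: filter_empty_conv)
  then show ?thesis
    using True by (simp add: set_take_subset set_drop_subset)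
next
  case False
  have "filter (\<lambda>v. v = Suc l) f = []" using assms(1) False by (auto simp: filter_empty_conv)
  moreover have "(\<lambda>v. v + r = Suc l) = (\<lambda>v. v = Suc (l - r))" using False by auto
  moreover have "length (filter Q (take i g)) + length (filter Q (drop i g)) = length (filter Q g)" for Q
    by (metis append_take_drop_id filter_append length_append)
  ultimately show ?thesis using False by (simp add: filter_map o_def)
qed

lemma KX_length: "b \<in> KX X dX n \<Longrightarrow> length (fst b) = n"
  by (auto simp: KX_def in_K_def)

lemma KX_zero_notin: "(f, xs) \<in> KX X dX n \<Longrightarrow> 0 \<notin> set f"
  by (auto simp: KX_def in_K_def)

lemma KX_Nil: "(f, []) \<notin> KX X dX n"
  by (simp add: KX_def in_K_def)

lemma KX_single:
  "(f, [x]) \<in> KX X dX n \<longleftrightarrow> f = replicate n 1 \<and> x \<in> X \<and> dX x = n \<and> 1 \<le> n"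
proof
  assume "(f, [x]) \<in> KX X dX n"
  then have f: "length f = n" "set f = {1}" "1 \<le> n" and x: "x \<in> X" "dX x = length (filter (\<lambda>v. v = 1) f)"
    by (auto simp: KX_def in_K_def)
  from f have "f = replicate n 1" by (intro replicate_eqI) auto
  with f x show "f = replicate n 1 \<and> x \<in> X \<and> dX x = n \<and> 1 \<le> n" by simp
next
  assume "f = replicate n 1 \<and> x \<in> X \<and> dX x = n \<and> 1 \<le> n"
  moreover have "lower_between (replicate n 1)" by (simp add: lower_between_def)
  ultimately show "(f, [x]) \<in> KX X dX n"
    by (simp add: KX_def in_K_iff filter_replicate)
qed

lemma bbul_KX:
  assumes a: "a \<in> KX X dX n" and c: "c \<in> KX X dX m" and i: "i \<le> m"
  shows "bbul i a c \<in> KX X dX (n + m)"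
proof -
  obtain f xs g ys where ac: "a = (f, xs)" "c = (g, ys)" by (cases a, cases c)
  let ?r = "length xs"
  let ?h = "map (\<lambda>v. v + ?r) (take i g) @ f @ map (\<lambda>v. v + ?r) (drop i g)"
  have fK: "in_K n ?r f" and fX: "\<forall>l<?r. xs ! l \<in> X \<and> dX (xs ! l) = length (filter (\<lambda>v. v = Suc l) f)"
    using a by (auto simp: KX_def ac)
  have gK: "in_K m (length ys) g"
    and gX: "\<forall>l<length ys. ys ! l \<in> X \<and> dX (ys ! l) = length (filter (\<lambda>v. v = Suc l) g)"
    using c by (auto simp: KX_def ac)
  have "set f \<subseteq> {1..?r}" "0 \<notin> set g" using fK gK by (auto simp: in_K_def)
  note count = length_filter_graft[OF this, of _ i]
  have "(xs @ ys) ! l \<in> X \<and> dX ((xs @ ys) ! l) = length (filter (\<lambda>v. v = Suc l) ?h)"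
    if "l < ?r + length ys" for l
    using that fX gX unfolding count by (auto simp: nth_append)
  moreover have "in_K (n + m) (length (xs @ ys)) ?h"
    using in_K_graft[OF fK gK i] by simp
  ultimately show ?thesis by (simp add: KX_def ac bbul_Pair)
qed

lemma ones_block:
  assumes "lower_between f" "1 \<in> set f" "0 \<notin> set f"
  obtains P d S where "f = P @ replicate d 1 @ S" "1 \<notin> set P" "1 \<notin> set S" "1 \<le> d"
proof -
  obtain P R where f: "f = P @ 1 # R" and P: "1 \<notin> set P"
    using split_list_first[OF assms(2)] by auto
  show ?thesis
  proof (cases "1 \<in> set R")
    case True
    then obtain M S where R: "R = M @ 1 # S" and S: "1 \<notin> set S"
      using split_list_last[OF True] by auto
    have "w = 1" if "w \<in> set M" for w
    proof -
      have "w \<le> 1" using assms(1) that lower_betweenD[of P 1 M S w] by (simp add: f R)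
      moreover have "0 \<notin> set M" using assms(3) by (simp add: f R)
      then have "w \<noteq> 0" using that by metis
      ultimately show ?thesis by (simp add: le_Suc_eq)
    qed
    then have "M = replicate (length M) 1" by (intro replicate_eqI) auto
    then have "f = P @ replicate (Suc (Suc (length M))) 1 @ S"
      unfolding f R by (metis append_Cons replicate_Suc replicate_app_Cons_same)
    then show ?thesis using P S by (rule that) simp
  next
    case False
    have "f = P @ replicate 1 1 @ R" by (simp add: f)
    then show ?thesis using P False by (rule that) simp
  qed
qed

lemma in_K_remove_ones:
  assumes f: "in_K n r f" and fPS: "f = P @ replicate d 1 @ S" and ones: "1 \<notin> set P" "1 \<notin> set S"
    and "1 \<le> d" "2 \<le> r"
  shows "in_K (n - d) (r - 1) (map (\<lambda>v. v - 1) (P @ S))"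
proof -
  have fK: "length f = n" "set f = {1..r}" "lower_between f" using f by (simp_all add: in_K_iff)
  have PS: "set (P @ S) = {2..r}"
  proof -
    have "set (P @ S) \<union> {1} = {1..r}" using fK(2) \<open>1 \<le> d\<close> by (auto simp: fPS)
    then have "set (P @ S) = {1..r} - {1}" using ones by auto
    also have "\<dots> = {2..r}" by auto
    finally show ?thesis .
  qed
  have "lower_between (P @ S)"
    using fK(3) unfolding fPS by (rule lower_between_remove_block)
  moreover have "mono (\<lambda>v::nat. v - 1)" by (simp add: mono_def diff_le_mono)
  moreover have "inj_on (\<lambda>v. v - 1) (set (P @ S))"
    unfolding PS by (auto simp: inj_on_def)
  ultimately have "lower_between (map (\<lambda>v. v - 1) (P @ S))"
    by (rule lower_between_map)
  moreover have "set (map (\<lambda>v. v - 1) (P @ S)) = {1..r - 1}"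
  proof -
    have "{2..r} = Suc ` {1..r - 1}" using \<open>2 \<le> r\<close> by (simp add: image_Suc_atLeastAtMost)
    then show ?thesis unfolding set_map PS by (simp only: image_image) simp
  qed
  moreover from this have "r - 1 \<le> length (map (\<lambda>v. v - 1) (P @ S))"
    using card_length[of "map (\<lambda>v. v - 1) (P @ S)"] by simp
  moreover have "length (map (\<lambda>v. v - 1) (P @ S)) = n - d" using fK(1) by (simp add: fPS)
  ultimately show ?thesis using \<open>2 \<le> r\<close> by (simp add: in_K_iff)
qed

lemma KX_Cons_decomp:
  assumes b: "(f, x # xs) \<in> KX X dX n" and "xs \<noteq> []"
  obtains j f' where "(f, x # xs) = bbul j (replicate (dX x) 1, [x]) (f', xs)"
    "(f', xs) \<in> KX X dX (n - dX x)" "j \<le> n - dX x" "x \<in> X" "1 \<le> dX x" "dX x \<le> n"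
proof -
  let ?r = "length (x # xs)"
  have fK: "in_K n ?r f"
    and fX: "\<forall>l<?r. (x # xs) ! l \<in> X \<and> dX ((x # xs) ! l) = length (filter (\<lambda>v. v = Suc l) f)"
    using b by (auto simp: KX_def)
  have "lower_between f" "1 \<in> set f" "0 \<notin> set f" "length f = n" using fK by (auto simp: in_K_iff)
  then obtain P d S where fPS: "f = P @ replicate d 1 @ S" and ones: "1 \<notin> set P" "1 \<notin> set S" "1 \<le> d"
    by (elim ones_block)
  define f' where "f' = map (\<lambda>v. v - 1) (P @ S)"
  have "filter (\<lambda>v. v = 1) P = []" "filter (\<lambda>v. v = 1) S = []"
    using ones by (auto simp: filter_empty_conv)
  then have dx: "dX x = d" and x: "x \<in> X"
    using fX[rule_format, of 0] by (simp_all add: fPS)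
  have "in_K (n - d) (length xs) f'"
    using in_K_remove_ones[OF fK fPS ones] \<open>xs \<noteq> []\<close> by (simp add: f'_def Suc_le_eq)
  moreover have "xs ! l \<in> X \<and> dX (xs ! l) = length (filter (\<lambda>v. v = Suc l) f')" if "l < length xs" for l
  proof -
    have "filter (\<lambda>v. v - 1 = Suc l) L = filter (\<lambda>v. v = Suc (Suc l)) L" for L :: "nat list"
      by (rule filter_cong) auto
    then have "length (filter (\<lambda>v. v = Suc l) f') = length (filter (\<lambda>v. v = Suc (Suc l)) f)"
      by (simp add: f'_def filter_map o_def fPS)
    then show ?thesis
      using fX[rule_format, of "Suc l"] that by simp
  qed
  ultimately have KX': "(f', xs) \<in> KX X dX (n - dX x)" by (simp add: KX_def dx)
  have "map (\<lambda>v. v - 1 + 1) L = L" if "set L \<subseteq> set f" for L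
  proof (rule map_idI)
    fix v assume "v \<in> set L"
    then have "v \<noteq> 0" using that \<open>0 \<notin> set f\<close> by (metis subsetD)
    then show "v - 1 + 1 = v" by simp
  qed
  moreover have "set P \<subseteq> set f" "set S \<subseteq> set f" by (auto simp: fPS)
  ultimately have "(f, x # xs) = bbul (length P) (replicate (dX x) 1, [x]) (f', xs)"
    by (simp add: bbul_Pair f'_def dx fPS map_map o_def)
  then show ?thesis
    using KX' _ x by (rule that) (use \<open>length f = n\<close> ones(3) in \<open>simp_all add: fPS dx\<close>)
qed

lemma KX_induct [consumes 1, case_names generator graft]:
  assumes "b \<in> KX X dX n"
    and generator: "\<And>x. x \<in> X \<Longrightarrow> 1 \<le> dX x \<Longrightarrow> P (replicate (dX x) 1, [x]) (dX x)"
    and graft: "\<And>x j f xs n. x \<in> X \<Longrightarrow> 1 \<le> dX x \<Longrightarrow> (f, xs) \<in> KX X dX n \<Longrightarrow> j \<le> n \<Longrightarrow>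
      P (f, xs) n \<Longrightarrow> P (bbul j (replicate (dX x) 1, [x]) (f, xs)) (dX x + n)"
  shows "P b n"
  using assms(1)
proof (induction "length (snd b)" arbitrary: b n rule: less_induct)
  case less
  obtain f x xs where b: "b = (f, x # xs)"
    using less.prems KX_Nil by (metis list.exhaust prod.exhaust)
  show ?case
  proof (cases "xs = []")
    case True
    then show ?thesis using less.prems generator by (auto simp: b KX_single)
  next
    case False
    with less.prems obtain j f' where dec: "(f, x # xs) = bbul j (replicate (dX x) 1, [x]) (f', xs)"
      "(f', xs) \<in> KX X dX (n - dX x)" "j \<le> n - dX x" "x \<in> X" "1 \<le> dX x" "dX x \<le> n"
      unfolding b by (rule KX_Cons_decomp)
    have "P (f', xs) (n - dX x)" using less.hyps[OF _ dec(2)] by (simp add: b)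
    then have "P (bbul j (replicate (dX x) 1, [x]) (f', xs)) (dX x + (n - dX x))"
      using graft dec by blast
    then show ?thesis using dec by (simp add: b)
  qed
qed

section \<open>The preshuffle algebra K[K_\<infinity>, X]\<close>

definition supp :: "('b \<Rightarrow> 'k::zero) \<Rightarrow> 'b set" where
  "supp u = {b. u b \<noteq> 0}"

lemma supp_add: "supp (u + v) \<subseteq> supp u \<union> supp (v :: 'b \<Rightarrow> 'k::monoid_add)"
  by (auto simp: supp_def)

lemma supp_fscale: "supp (fscale c u) \<subseteq> supp u"
  by (auto simp: supp_def fscale_def)

lemma sum_apply: "(\<Sum>n\<in>S. c n) b = (\<Sum>n\<in>S. c n b)"
  by (induction S rule: infinite_finite_induct) auto

lemma supp_sum: "supp (\<Sum>n\<in>S. c n) \<subseteq> (\<Union>n\<in>S. supp (c n))"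
proof
  fix b assume "b \<in> supp (\<Sum>n\<in>S. c n)"
  then have "(\<Sum>n\<in>S. c n b) \<noteq> 0" by (simp add: supp_def sum_apply)
  then obtain n where "n \<in> S" "c n b \<noteq> 0" by (meson sum.neutral)
  then show "b \<in> (\<Union>n\<in>S. supp (c n))" by (auto simp: supp_def)
qed

lemma FG_iff: "u \<in> FG X dX n \<longleftrightarrow> finite (supp u) \<and> supp u \<subseteq> KX X dX n"
  by (auto simp: FG_def supp_def)

lemma finite_supp_FG: "u \<in> FG X dX n \<Longrightarrow> finite (supp u)"
  by (simp add: FG_iff)

lemma gcarrier_FG_iff:
  "u \<in> gcarrier (FG X dX) \<longleftrightarrow> finite (supp u) \<and> (\<forall>b\<in>supp u. b \<in> KX X dX (length (fst b)))"
proof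
  assume "u \<in> gcarrier (FG X dX)"
  then obtain S c where u: "u = (\<Sum>n\<in>S. c n)" and S: "finite S" and c: "\<forall>n\<in>S. c n \<in> FG X dX n"
    by (auto simp: gcarrier_def)
  have sub: "supp u \<subseteq> (\<Union>n\<in>S. supp (c n))" unfolding u by (rule supp_sum)
  moreover have "finite (\<Union>n\<in>S. supp (c n))" using S c by (intro finite_UN_I) (auto simp: FG_iff)
  moreover have "b \<in> KX X dX (length (fst b))" if "b \<in> supp u" for b
  proof -
    have "b \<in> (\<Union>n\<in>S. supp (c n))" using sub that by (rule subsetD)
    then obtain n where "n \<in> S" "b \<in> supp (c n)" by (rule UN_E)
    then have "b \<in> KX X dX n" using c by (auto simp: FG_iff)
    moreover from this have "length (fst b) = n" by (rule KX_length)
    ultimately show ?thesis by simp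
  qed
  ultimately show "finite (supp u) \<and> (\<forall>b\<in>supp u. b \<in> KX X dX (length (fst b)))"
    by (auto intro: finite_subset)
next
  assume u: "finite (supp u) \<and> (\<forall>b\<in>supp u. b \<in> KX X dX (length (fst b)))"
  define S where "S = (\<lambda>b. length (fst b)) ` supp u"
  define c where "c n = (\<lambda>b. if length (fst b) = n then u b else 0)" for n
  have "finite S" using u by (simp add: S_def)
  moreover have "c n \<in> FG X dX n" for n
  proof -
    have "supp (c n) \<subseteq> supp u" by (auto simp: supp_def c_def)
    moreover have "supp (c n) \<subseteq> KX X dX n" using u by (auto simp: supp_def c_def)
    ultimately show ?thesis using u by (auto simp: FG_iff intro: finite_subset)
  qed
  moreover have "u = (\<Sum>n\<in>S. c n)"
  proof
    fix b
    have "(\<Sum>n\<in>S. c n) b = (if length (fst b) \<in> S then u b else 0)"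
      using \<open>finite S\<close> by (simp add: sum_apply c_def sum.delta)
    also have "\<dots> = u b" by (auto simp: S_def supp_def)
    finally show "u b = (\<Sum>n\<in>S. c n) b" by simp
  qed
  ultimately show "u \<in> gcarrier (FG X dX)" unfolding gcarrier_def by blast
qed

lemma graded_vs_FG: "graded_vs (fscale :: 'k::field \<Rightarrow> _) (FG (X :: 'x set) dX)"
  unfolding graded_vs_def
proof (intro conjI allI impI ballI)
  fix S :: "nat set" and c d :: "nat \<Rightarrow> nat list \<times> 'x list \<Rightarrow> 'k" and n
  assume H: "finite S \<and> (\<forall>n\<in>S. c n \<in> FG X dX n \<and> d n \<in> FG X dX n) \<and> sum c S = sum d S"
    and n: "n \<in> S"
  have vanish: "c n' b = 0" "d n' b = 0" if "n' \<in> S" "length (fst b) \<noteq> n'" for n' b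
  proof -
    have "b \<notin> KX X dX n'" using that(2) KX_length by blast
    then show "c n' b = 0" "d n' b = 0" using H that(1) by (auto simp: FG_iff supp_def)
  qed
  show "c n = d n"
  proof
    fix b
    show "c n b = d n b"
    proof (cases "length (fst b) = n")
      case True
      then have "sum c S b = c n b" "sum d S b = d n b"
        unfolding sum_apply using vanish n H by (simp_all add: sum.remove[of S n] sum.neutral)
      then show ?thesis using H by simp
    qed (use vanish n in simp)
  qed
next
  fix n and x y :: "nat list \<times> 'x list \<Rightarrow> 'k"
  assume "x \<in> FG X dX n" "y \<in> FG X dX n"
  then show "x + y \<in> FG X dX n"
    using supp_add[of x y] by (auto simp: FG_iff intro: finite_subset)
next
  fix n c and x :: "nat list \<times> 'x list \<Rightarrow> 'k"
  assume "x \<in> FG X dX n"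
  then show "fscale c x \<in> FG X dX n"
    using supp_fscale[of c x] by (auto simp: FG_iff intro: finite_subset)
qed (simp_all add: fscale_def algebra_simps FG_iff supp_def fun_eq_iff)

lemma fbul_eq_sum:
  assumes "finite A" "finite B" "supp u \<subseteq> A" "supp v \<subseteq> B"
  shows "fbul i u v b = (\<Sum>a\<in>A. \<Sum>c\<in>B. if bbul i a c = b then u a * v c else 0)"
proof -
  let ?T = "{(a, c). u a \<noteq> 0 \<and> v c \<noteq> 0 \<and> bbul i a c = b}"
  have "?T \<subseteq> A \<times> B" using assms by (auto simp: supp_def)
  then have "fbul i u v b = (\<Sum>(a, c)\<in>A \<times> B. if bbul i a c = b then u a * v c else 0)"
    unfolding fbul_def by (intro sum.mono_neutral_cong_left) (use assms in \<open>auto split: if_splits\<close>)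
  then show ?thesis by (simp add: sum.cartesian_product)
qed

lemma supp_fbul: "supp (fbul i u v) \<subseteq> (\<lambda>(a, c). bbul i a c) ` (supp u \<times> supp v)"
proof
  fix b assume "b \<in> supp (fbul i u v)"
  then have "fbul i u v b \<noteq> 0" by (simp add: supp_def)
  then have "{(a, c). u a \<noteq> 0 \<and> v c \<noteq> 0 \<and> bbul i a c = b} \<noteq> {}"
    unfolding fbul_def by (metis (no_types, lifting) sum.empty)
  then show "b \<in> (\<lambda>(a, c). bbul i a c) ` (supp u \<times> supp v)" by (force simp: supp_def)
qed

lemma finite_supp_fbul:
  "finite (supp u) \<Longrightarrow> finite (supp v) \<Longrightarrow> finite (supp (fbul i u v))"
  using supp_fbul by (metis finite_SigmaI finite_imageI finite_subset)

lemma fbul_FG: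
  assumes u: "u \<in> FG X dX n" and v: "v \<in> FG X dX m" and i: "i \<le> m"
  shows "fbul i u v \<in> FG X dX (n + m)"
proof -
  have "supp (fbul i u v) \<subseteq> KX X dX (n + m)"
    using assms supp_fbul[of i u v] bbul_KX[OF _ _ i] by (fastforce simp: FG_iff)
  moreover have "finite (supp u)" "finite (supp v)" using u v by (simp_all add: FG_iff)
  then have "finite (supp (fbul i u v))" by (rule finite_supp_fbul)
  ultimately show ?thesis by (simp add: FG_iff)
qed

lemma fbul_add_left:
  assumes "finite (supp u)" "finite (supp u')" "finite (supp v)"
  shows "fbul i (u + u') v = fbul i u v + fbul i u' v"
proof
  fix b
  let ?A = "supp u \<union> supp u'"
  have "fbul i (u + u') v b = (\<Sum>a\<in>?A. \<Sum>c\<in>supp v. if bbul i a c = b then (u + u') a * v c else 0)"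
    using assms supp_add[of u u'] by (intro fbul_eq_sum) auto
  also have "\<dots> = (\<Sum>a\<in>?A. \<Sum>c\<in>supp v. if bbul i a c = b then u a * v c else 0)
     + (\<Sum>a\<in>?A. \<Sum>c\<in>supp v. if bbul i a c = b then u' a * v c else 0)"
    by (simp add: sum.distrib[symmetric] distrib_right cong: if_cong) (intro sum.cong refl, simp)
  also have "\<dots> = fbul i u v b + fbul i u' v b"
    using assms by (simp add: fbul_eq_sum[of ?A "supp v" u v] fbul_eq_sum[of ?A "supp v" u' v])
  finally show "fbul i (u + u') v b = (fbul i u v + fbul i u' v) b" by simp
qed

lemma fbul_add_right:
  assumes "finite (supp u)" "finite (supp v)" "finite (supp v')"
  shows "fbul i u (v + v') = fbul i u v + fbul i u v'"
proof
  fix b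
  let ?B = "supp v \<union> supp v'"
  have "fbul i u (v + v') b = (\<Sum>a\<in>supp u. \<Sum>c\<in>?B. if bbul i a c = b then u a * (v + v') c else 0)"
    using assms supp_add[of v v'] by (intro fbul_eq_sum) auto
  also have "\<dots> = (\<Sum>a\<in>supp u. \<Sum>c\<in>?B. if bbul i a c = b then u a * v c else 0)
     + (\<Sum>a\<in>supp u. \<Sum>c\<in>?B. if bbul i a c = b then u a * v' c else 0)"
    by (simp add: sum.distrib[symmetric] distrib_left cong: if_cong) (intro sum.cong refl, simp)
  also have "\<dots> = fbul i u v b + fbul i u v' b"
    using assms by (simp add: fbul_eq_sum[of "supp u" ?B u v] fbul_eq_sum[of "supp u" ?B u v'])
  finally show "fbul i u (v + v') b = (fbul i u v + fbul i u v') b" by simp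
qed

lemma fbul_fscale_left:
  assumes "finite (supp u)" "finite (supp v)"
  shows "fbul i (fscale c u) v = fscale c (fbul i u v)"
proof
  fix b
  have "fbul i (fscale c u) v b = (\<Sum>a\<in>supp u. \<Sum>e\<in>supp v. if bbul i a e = b then fscale c u a * v e else 0)"
    using assms supp_fscale[of c u] by (intro fbul_eq_sum) auto
  also have "\<dots> = c * (\<Sum>a\<in>supp u. \<Sum>e\<in>supp v. if bbul i a e = b then u a * v e else 0)"
    by (simp add: sum_distrib_left fscale_def cong: if_cong) (intro sum.cong refl, simp)
  also have "\<dots> = fscale c (fbul i u v) b"
    using assms by (simp add: fbul_eq_sum fscale_def)
  finally show "fbul i (fscale c u) v b = fscale c (fbul i u v) b" .
qed

lemma fbul_fscale_right:
  assumes "finite (supp u)" "finite (supp v)"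
  shows "fbul i u (fscale c v) = fscale c (fbul i u v)"
proof
  fix b
  have "fbul i u (fscale c v) b = (\<Sum>a\<in>supp u. \<Sum>e\<in>supp v. if bbul i a e = b then u a * fscale c v e else 0)"
    using assms supp_fscale[of c v] by (intro fbul_eq_sum) auto
  also have "\<dots> = c * (\<Sum>a\<in>supp u. \<Sum>e\<in>supp v. if bbul i a e = b then u a * v e else 0)"
    by (simp add: sum_distrib_left fscale_def cong: if_cong) (intro sum.cong refl, simp)
  also have "\<dots> = fscale c (fbul i u v) b"
    using assms by (simp add: fbul_eq_sum fscale_def)
  finally show "fbul i u (fscale c v) b = fscale c (fbul i u v) b" .
qed

lemma sum_if_image_collapse:
  fixes H :: "'a \<Rightarrow> 'b \<Rightarrow> 'c \<Rightarrow> 'd::comm_monoid_add"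
  assumes "finite D" "finite A" "finite B" "\<And>a b. a \<in> A \<Longrightarrow> b \<in> B \<Longrightarrow> g a b \<in> D"
  shows "(\<Sum>e\<in>D. \<Sum>a\<in>A. \<Sum>b\<in>B. if g a b = e then H a b e else 0) = (\<Sum>a\<in>A. \<Sum>b\<in>B. H a b (g a b))"
proof -
  have "(\<Sum>e\<in>D. \<Sum>a\<in>A. \<Sum>b\<in>B. if g a b = e then H a b e else 0)
      = (\<Sum>a\<in>A. \<Sum>b\<in>B. \<Sum>e\<in>D. if g a b = e then H a b e else 0)"
    by (subst sum.swap) (simp only: sum.swap[where A = D])
  also have "\<dots> = (\<Sum>a\<in>A. \<Sum>b\<in>B. H a b (g a b))"
    using assms by (auto intro!: sum.cong simp: sum.delta)
  finally show ?thesis .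
qed

lemma if_sum_sum_times:
  "(if P then (\<Sum>a\<in>A. \<Sum>b\<in>B. if Q a b then f a b else 0) * (z::'k::semiring_0) else 0) =
   (\<Sum>a\<in>A. \<Sum>b\<in>B. if Q a b then (if P then f a b * z else 0) else 0)"
  by (cases P) (simp_all add: sum_distrib_right cong: if_cong, intro sum.cong refl, simp)

lemma if_times_sum_sum:
  "(if P then (z::'k::semiring_0) * (\<Sum>a\<in>A. \<Sum>b\<in>B. if Q a b then f a b else 0) else 0) =
   (\<Sum>a\<in>A. \<Sum>b\<in>B. if Q a b then (if P then z * f a b else 0) else 0)"
  by (cases P) (simp_all add: sum_distrib_left cong: if_cong, intro sum.cong refl, simp)

lemma fbul_fbul_left:
  assumes fin: "finite (supp x)" "finite (supp y)" "finite (supp z)"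
  shows "fbul j (fbul i x y) z b = (\<Sum>a\<in>supp x. \<Sum>b'\<in>supp y. \<Sum>c\<in>supp z.
      if bbul j (bbul i a b') c = b then x a * y b' * z c else 0)"
proof -
  define D where "D = (\<lambda>(a, c). bbul i a c) ` (supp x \<times> supp y)"
  have D: "finite D" "supp (fbul i x y) \<subseteq> D" using fin supp_fbul[of i x y] by (auto simp: D_def)
  have "fbul j (fbul i x y) z b = (\<Sum>c\<in>supp z. \<Sum>e\<in>D. if bbul j e c = b then fbul i x y e * z c else 0)"
    using fbul_eq_sum[OF D(1) fin(3) D(2) order_refl] by (simp add: sum.swap[where A = D])
  also have "\<dots> = (\<Sum>c\<in>supp z. \<Sum>e\<in>D. \<Sum>a\<in>supp x. \<Sum>b'\<in>supp y.
      if bbul i a b' = e then (if bbul j e c = b then x a * y b' * z c else 0) else 0)"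
    using fbul_eq_sum[OF fin(1,2) order_refl order_refl, of i] by (simp only: if_sum_sum_times)
  also have "\<dots> = (\<Sum>c\<in>supp z. \<Sum>a\<in>supp x. \<Sum>b'\<in>supp y.
      if bbul j (bbul i a b') c = b then x a * y b' * z c else 0)"
    by (intro sum.cong refl sum_if_image_collapse) (use D fin in \<open>auto simp: D_def\<close>)
  also have "\<dots> = (\<Sum>a\<in>supp x. \<Sum>b'\<in>supp y. \<Sum>c\<in>supp z.
      if bbul j (bbul i a b') c = b then x a * y b' * z c else 0)"
    by (subst sum.swap) (simp only: sum.swap[where A = "supp z"])
  finally show ?thesis .
qed

lemma fbul_fbul_right:
  assumes fin: "finite (supp x)" "finite (supp y)" "finite (supp z)"
  shows "fbul k x (fbul j y z) b = (\<Sum>a\<in>supp x. \<Sum>b'\<in>supp y. \<Sum>c\<in>supp z.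
      if bbul k a (bbul j b' c) = b then x a * (y b' * z c) else 0)"
proof -
  define E where "E = (\<lambda>(a, c). bbul j a c) ` (supp y \<times> supp z)"
  have E: "finite E" "supp (fbul j y z) \<subseteq> E" using fin supp_fbul[of j y z] by (auto simp: E_def)
  have "fbul k x (fbul j y z) b = (\<Sum>a\<in>supp x. \<Sum>e\<in>E. if bbul k a e = b then x a * fbul j y z e else 0)"
    using fbul_eq_sum[OF fin(1) E(1) order_refl E(2)] .
  also have "\<dots> = (\<Sum>a\<in>supp x. \<Sum>e\<in>E. \<Sum>b'\<in>supp y. \<Sum>c\<in>supp z.
      if bbul j b' c = e then (if bbul k a e = b then x a * (y b' * z c) else 0) else 0)"
    using fbul_eq_sum[OF fin(2,3) order_refl order_refl, of j] by (simp only: if_times_sum_sum)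
  also have "\<dots> = (\<Sum>a\<in>supp x. \<Sum>b'\<in>supp y. \<Sum>c\<in>supp z.
      if bbul k a (bbul j b' c) = b then x a * (y b' * z c) else 0)"
    by (intro sum.cong refl sum_if_image_collapse) (use E fin in \<open>auto simp: E_def\<close>)
  finally show ?thesis .
qed

lemma fbul_assoc:
  assumes x: "x \<in> FG X dX n" and y: "y \<in> FG X dX m" and z: "z \<in> FG X dX p"
    and i: "i \<le> m" and j: "j \<le> p"
  shows "fbul j (fbul i x y) z = fbul (i + j) x (fbul j y z)"
proof
  fix b
  have fin: "finite (supp x)" "finite (supp y)" "finite (supp z)" using x y z by (simp_all add: finite_supp_FG)
  have "bbul j (bbul i a b') c = bbul (i + j) a (bbul j b' c)" if "b' \<in> supp y" "c \<in> supp z" for a b' c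
  proof (rule bbul_assoc)
    have "b' \<in> KX X dX m" "c \<in> KX X dX p" using that y z by (auto simp: FG_iff)
    then show "i \<le> length (fst b')" "j \<le> length (fst c)" using i j by (simp_all add: KX_length)
  qed
  then show "fbul j (fbul i x y) z b = fbul (i + j) x (fbul j y z) b"
    unfolding fbul_fbul_left[OF fin] fbul_fbul_right[OF fin] by (intro sum.cong refl) (simp add: mult.assoc)
qed

lemma preshuffle_algebra_FG: "preshuffle_algebra (fscale :: 'k::field \<Rightarrow> _) (FG X dX) fbul"
  unfolding preshuffle_algebra_def
proof (intro conjI allI impI)
  show "graded_vs (fscale :: 'k \<Rightarrow> _) (FG X dX)" by (rule graded_vs_FG)
qed (auto intro: fbul_FG fbul_add_left fbul_add_right fbul_fscale_left fbul_fscale_right fbul_assoc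
    finite_supp_FG)

definition delta :: "'b \<Rightarrow> 'b \<Rightarrow> 'k::zero_neq_one" where
  "delta b = (\<lambda>b'. if b' = b then 1 else 0)"

lemma supp_delta: "supp (delta b) = {b}"
  by (auto simp: supp_def delta_def)

lemma delta_FG: "b \<in> KX X dX n \<Longrightarrow> delta b \<in> FG X dX n"
  by (simp add: FG_iff supp_delta)

lemma fbul_delta: "fbul i (delta a) (delta c) = (delta (bbul i a c) :: _ \<Rightarrow> 'k::field)"
proof
  fix b
  have "{(a', c'). delta a a' \<noteq> (0::'k) \<and> delta c c' \<noteq> (0::'k) \<and> bbul i a' c' = b} =
        (if bbul i a c = b then {(a, c)} else {})"
    by (auto simp: delta_def)
  then show "fbul i (delta a) (delta c) b = (delta (bbul i a c) :: _ \<Rightarrow> 'k) b"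
    by (simp add: fbul_def delta_def)
qed

lemma gen_eq_delta: "gen dX x = delta (replicate (dX x) 1, [x])"
  by (simp add: gen_def delta_def fun_eq_iff)

lemma sum_fscale_delta:
  "finite A \<Longrightarrow> (\<Sum>b\<in>A. fscale (u b) (delta b)) = (\<lambda>b'. if b' \<in> A then u b' else 0)"
  by (simp add: fun_eq_iff sum_apply fscale_def delta_def if_distrib sum.delta cong: if_cong)

section \<open>Evaluation in a preshuffle algebra\<close>

(* Recursion along the factorisation of the header: j is the number of entries of f before its block
   of 1s, and f' arises from f by deleting the 1s and lowering the other values by one. *)
fun eval_basis :: "(nat \<Rightarrow> 'a \<Rightarrow> 'a \<Rightarrow> 'a) \<Rightarrow> ('x \<Rightarrow> 'a) \<Rightarrow> nat list \<times> 'x list \<Rightarrow> 'a::zero" where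
  "eval_basis bul phi (f, []) = 0"
| "eval_basis bul phi (f, [x]) = phi x"
| "eval_basis bul phi (f, x # y # ys) = bul (length (takeWhile (\<lambda>v. v \<noteq> 1) f)) (phi x)
     (eval_basis bul phi (map (\<lambda>v. v - 1) (filter (\<lambda>v. v \<noteq> 1) f), y # ys))"

lemma eval_basis_bbul_generator:
  assumes "0 \<notin> set g" "j \<le> length g" "ys \<noteq> []" "1 \<le> d"
  shows "eval_basis bul phi (bbul j (replicate d 1, [x]) (g, ys)) = bul j (phi x) (eval_basis bul phi (g, ys))"
proof -
  obtain y ys' where ys: "ys = y # ys'" using assms(3) by (cases ys) auto
  let ?A = "map (\<lambda>v. v + 1) (take j g)" and ?B = "map (\<lambda>v. v + 1) (drop j g)"
  have "0 \<notin> set (take j g)" "0 \<notin> set (drop j g)"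
    using assms(1) by (auto dest: in_set_takeD in_set_dropD)
  then have A: "1 \<notin> set ?A" and B: "1 \<notin> set ?B" by auto
  have "takeWhile (\<lambda>v. v \<noteq> 1) (?A @ replicate d 1 @ ?B) = ?A @ takeWhile (\<lambda>v. v \<noteq> 1) (replicate d 1 @ ?B)"
    by (rule takeWhile_append2) (metis A)
  also have "takeWhile (\<lambda>v. v \<noteq> 1) (replicate d 1 @ ?B) = []"
    using \<open>1 \<le> d\<close> by (cases d) auto
  finally have "takeWhile (\<lambda>v. v \<noteq> 1) (?A @ replicate d 1 @ ?B) = ?A" by simp
  moreover have "filter (\<lambda>v. v \<noteq> 1) L = L" if "1 \<notin> set L" for L :: "nat list"
    using that by (induction L) auto
  then have "map (\<lambda>v. v - 1) (filter (\<lambda>v. v \<noteq> 1) (?A @ replicate d 1 @ ?B)) = g"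
    using A B by (simp add: map_map o_def flip: map_append)
  ultimately show ?thesis
    using assms(2) by (simp add: bbul_Pair ys)
qed

lemma eval_basis_graft:
  assumes "(f, xs) \<in> KX X dX n" "j \<le> n" "1 \<le> d"
  shows "eval_basis bul phi (bbul j (replicate d 1, [x]) (f, xs)) = bul j (phi x) (eval_basis bul phi (f, xs))"
proof (rule eval_basis_bbul_generator)
  show "0 \<notin> set f" using assms(1) by (rule KX_zero_notin)
  show "j \<le> length f" using KX_length[OF assms(1)] assms(2) by simp
  show "xs \<noteq> []" using assms(1) KX_Nil by (cases xs) auto
qed (rule assms(3))

definition free_ext :: "('k::field \<Rightarrow> 'a \<Rightarrow> 'a) \<Rightarrow> (nat \<Rightarrow> 'a \<Rightarrow> 'a \<Rightarrow> 'a) \<Rightarrow> ('x \<Rightarrow> 'a)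
    \<Rightarrow> (nat list \<times> 'x list \<Rightarrow> 'k) \<Rightarrow> 'a::ab_group_add" where
  "free_ext scale bul phi u = (\<Sum>b\<in>supp u. scale (u b) (eval_basis bul phi b))"

locale preshuffle_alg =
  fixes scale :: "'k::field \<Rightarrow> 'a::ab_group_add \<Rightarrow> 'a" and G :: "nat \<Rightarrow> 'a set"
    and bul :: "nat \<Rightarrow> 'a \<Rightarrow> 'a \<Rightarrow> 'a"
  assumes preshuffle: "preshuffle_algebra scale G bul"
begin

sublocale module scale
  using preshuffle by unfold_locales (simp_all add: preshuffle_algebra_def graded_vs_def)

lemma G_zero: "0 \<in> G n"
  and G_add: "x \<in> G n \<Longrightarrow> y \<in> G n \<Longrightarrow> x + y \<in> G n"
  and G_scale: "x \<in> G n \<Longrightarrow> scale c x \<in> G n"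
  using preshuffle by (simp_all add: preshuffle_algebra_def graded_vs_def)

lemma G_sum: "(\<And>a. a \<in> A \<Longrightarrow> f a \<in> G n) \<Longrightarrow> (\<Sum>a\<in>A. f a) \<in> G n"
  by (induction A rule: infinite_finite_induct) (auto simp: G_zero G_add)

lemma bul_in_G: "x \<in> G n \<Longrightarrow> y \<in> G m \<Longrightarrow> i \<le> m \<Longrightarrow> bul i x y \<in> G (n + m)"
  using preshuffle by (simp add: preshuffle_algebra_def)

lemma bul_add_left:
  "x \<in> G n \<Longrightarrow> x' \<in> G n \<Longrightarrow> y \<in> G m \<Longrightarrow> i \<le> m \<Longrightarrow> bul i (x + x') y = bul i x y + bul i x' y"
  using preshuffle by (simp add: preshuffle_algebra_def)

lemma bul_add_right:
  "x \<in> G n \<Longrightarrow> y \<in> G m \<Longrightarrow> y' \<in> G m \<Longrightarrow> i \<le> m \<Longrightarrow> bul i x (y + y') = bul i x y + bul i x y'"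
  using preshuffle by (simp add: preshuffle_algebra_def)

lemma bul_scale_left: "x \<in> G n \<Longrightarrow> y \<in> G m \<Longrightarrow> i \<le> m \<Longrightarrow> bul i (scale c x) y = scale c (bul i x y)"
  and bul_scale_right: "x \<in> G n \<Longrightarrow> y \<in> G m \<Longrightarrow> i \<le> m \<Longrightarrow> bul i x (scale c y) = scale c (bul i x y)"
  using preshuffle by (simp_all add: preshuffle_algebra_def)

lemma bul_assoc:
  "x \<in> G n \<Longrightarrow> y \<in> G m \<Longrightarrow> z \<in> G p \<Longrightarrow> i \<le> m \<Longrightarrow> j \<le> p \<Longrightarrow>
    bul j (bul i x y) z = bul (i + j) x (bul j y z)"
  using preshuffle unfolding preshuffle_algebra_def by blast

lemma bul_zero_left: "y \<in> G m \<Longrightarrow> i \<le> m \<Longrightarrow> bul i 0 y = 0"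
  using bul_scale_left[OF G_zero, of y m i 0] by simp

lemma bul_zero_right: "x \<in> G n \<Longrightarrow> i \<le> m \<Longrightarrow> bul i x 0 = 0"
  using bul_scale_right[OF _ G_zero, of x n i m 0] by simp

lemma bul_sum_left:
  assumes "\<And>a. a \<in> A \<Longrightarrow> f a \<in> G n" "y \<in> G m" "i \<le> m"
  shows "bul i (\<Sum>a\<in>A. f a) y = (\<Sum>a\<in>A. bul i (f a) y)"
  using assms(1)
proof (induction A rule: infinite_finite_induct)
  case (insert a A)
  have "f a \<in> G n" "sum f A \<in> G n" using insert.prems by (auto intro: G_sum)
  from bul_add_left[OF this assms(2,3)] show ?case using insert by simp
qed (use assms(2,3) in \<open>simp_all add: bul_zero_left\<close>)

lemma bul_sum_right:
  assumes "\<And>c. c \<in> C \<Longrightarrow> g c \<in> G m" "x \<in> G n" "i \<le> m"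
  shows "bul i x (\<Sum>c\<in>C. g c) = (\<Sum>c\<in>C. bul i x (g c))"
  using assms(1)
proof (induction C rule: infinite_finite_induct)
  case (insert c C)
  have "g c \<in> G m" "sum g C \<in> G m" using insert.prems by (auto intro: G_sum)
  from bul_add_right[OF assms(2) this assms(3)] show ?case using insert by simp
qed (use assms(2,3) in \<open>simp_all add: bul_zero_right\<close>)

lemma bul_sum_sum:
  assumes "\<And>a. a \<in> A \<Longrightarrow> f a \<in> G n" "\<And>c. c \<in> C \<Longrightarrow> g c \<in> G m" "i \<le> m"
  shows "bul i (\<Sum>a\<in>A. f a) (\<Sum>c\<in>C. g c) = (\<Sum>a\<in>A. \<Sum>c\<in>C. bul i (f a) (g c))"
proof -
  have "bul i (\<Sum>a\<in>A. f a) (\<Sum>c\<in>C. g c) = (\<Sum>a\<in>A. bul i (f a) (\<Sum>c\<in>C. g c))"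
    using assms by (intro bul_sum_left G_sum)
  also have "\<dots> = (\<Sum>a\<in>A. \<Sum>c\<in>C. bul i (f a) (g c))"
    using assms by (intro sum.cong refl bul_sum_right)
  finally show ?thesis .
qed

lemma eval_basis_in_G:
  assumes "b \<in> KX X dX n" and phi: "\<forall>x\<in>X. phi x \<in> G (dX x)"
  shows "eval_basis bul phi b \<in> G n"
  using assms(1)
proof (induction rule: KX_induct)
  case (generator x)
  then show ?case using phi by simp
next
  case (graft x j f xs n')
  have "phi x \<in> G (dX x)" using phi graft.hyps(1) by simp
  from bul_in_G[OF this graft.IH graft.hyps(4)] show ?case
    by (simp only: eval_basis_graft[OF graft.hyps(3,4,2)])
qed

lemma eval_basis_bbul:
  assumes a: "a \<in> KX X dX n" and c: "c \<in> KX X dX m" and i: "i \<le> m"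
    and phi: "\<forall>x\<in>X. phi x \<in> G (dX x)"
  shows "eval_basis bul phi (bbul i a c) = bul i (eval_basis bul phi a) (eval_basis bul phi c)"
  using a
proof (induction rule: KX_induct)
  case (generator x)
  obtain g ys where "c = (g, ys)" by (cases c)
  then show ?case using eval_basis_graft[of g ys X dX m i _ bul phi] c i generator.hyps(2) by simp
next
  case (graft x j f xs n')
  let ?g = "(replicate (dX x) 1, [x])"
  have x: "phi x \<in> G (dX x)" using phi graft.hyps(1) by simp
  have a': "eval_basis bul phi (f, xs) \<in> G n'" and c': "eval_basis bul phi c \<in> G m"
    using graft.hyps(3) c phi by (simp_all add: eval_basis_in_G)
  obtain h zs where hz: "bbul i (f, xs) c = (h, zs)" by (cases "bbul i (f, xs) c")
  have hzK: "(h, zs) \<in> KX X dX (n' + m)" using bbul_KX[OF graft.hyps(3) c i] hz by simp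
  have "length f = n'" "length (fst c) = m"
    using KX_length[OF graft.hyps(3)] KX_length[OF c] by simp_all
  then have "bbul i (bbul j ?g (f, xs)) c = bbul (j + i) ?g (h, zs)"
    using bbul_assoc[of j "(f, xs)" i c ?g] graft.hyps(4) i hz by simp
  then have "eval_basis bul phi (bbul i (bbul j ?g (f, xs)) c)
      = bul (j + i) (phi x) (bul i (eval_basis bul phi (f, xs)) (eval_basis bul phi c))"
    using eval_basis_graft[OF hzK _ graft.hyps(2), of "j + i" bul phi] graft.hyps(4) i graft.IH hz by simp
  also have "\<dots> = bul i (bul j (phi x) (eval_basis bul phi (f, xs))) (eval_basis bul phi c)"
    by (rule bul_assoc[symmetric, OF x a' c' graft.hyps(4) i])
  also have "\<dots> = bul i (eval_basis bul phi (bbul j ?g (f, xs))) (eval_basis bul phi c)"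
    using eval_basis_graft[OF graft.hyps(3,4,2), of bul phi] by simp
  finally show ?case .
qed

lemma free_ext_eq_sum:
  "finite A \<Longrightarrow> supp u \<subseteq> A \<Longrightarrow> free_ext scale bul phi u = (\<Sum>b\<in>A. scale (u b) (eval_basis bul phi b))"
  unfolding free_ext_def by (rule sum.mono_neutral_left) (auto simp: supp_def)

lemma free_ext_add:
  assumes "finite (supp u)" "finite (supp v)"
  shows "free_ext scale bul phi (u + v) = free_ext scale bul phi u + free_ext scale bul phi v"
proof -
  let ?A = "supp u \<union> supp v"
  have "free_ext scale bul phi (u + v) = (\<Sum>b\<in>?A. scale ((u + v) b) (eval_basis bul phi b))"
    using assms supp_add[of u v] by (intro free_ext_eq_sum) auto
  also have "\<dots> = (\<Sum>b\<in>?A. scale (u b) (eval_basis bul phi b)) + (\<Sum>b\<in>?A. scale (v b) (eval_basis bul phi b))"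
    by (simp add: scale_left_distrib sum.distrib)
  also have "\<dots> = free_ext scale bul phi u + free_ext scale bul phi v"
    using assms by (simp add: free_ext_eq_sum[of ?A u] free_ext_eq_sum[of ?A v])
  finally show ?thesis .
qed

lemma free_ext_fscale:
  assumes "finite (supp u)"
  shows "free_ext scale bul phi (fscale c u) = scale c (free_ext scale bul phi u)"
proof -
  have "free_ext scale bul phi (fscale c u) = (\<Sum>b\<in>supp u. scale (fscale c u b) (eval_basis bul phi b))"
    using assms supp_fscale by (rule free_ext_eq_sum)
  then show ?thesis by (simp add: free_ext_def scale_sum_right fscale_def)
qed

lemma free_ext_in_G:
  assumes "u \<in> FG X dX n" "\<forall>x\<in>X. phi x \<in> G (dX x)"
  shows "free_ext scale bul phi u \<in> G n"
  unfolding free_ext_def using assms by (intro G_sum G_scale eval_basis_in_G) (auto simp: FG_iff)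

lemma scale_eval_basis_bbul:
  assumes a: "a \<in> KX X dX n" and c: "c \<in> KX X dX m" and i: "i \<le> m"
    and phi: "\<forall>x\<in>X. phi x \<in> G (dX x)"
  shows "scale (s * t) (eval_basis bul phi (bbul i a c)) =
    bul i (scale s (eval_basis bul phi a)) (scale t (eval_basis bul phi c))"
proof -
  have x: "eval_basis bul phi a \<in> G n" and y: "eval_basis bul phi c \<in> G m"
    using a c phi by (simp_all add: eval_basis_in_G)
  have "bul i (scale s (eval_basis bul phi a)) (scale t (eval_basis bul phi c))
      = scale t (scale s (bul i (eval_basis bul phi a) (eval_basis bul phi c)))"
    by (simp only: bul_scale_right[OF G_scale[OF x] y i] bul_scale_left[OF x y i])
  then show ?thesis by (simp add: eval_basis_bbul[OF a c i phi] mult.commute)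
qed

lemma free_ext_fbul:
  assumes u: "u \<in> FG X dX n" and v: "v \<in> FG X dX m" and i: "i \<le> m"
    and phi: "\<forall>x\<in>X. phi x \<in> G (dX x)"
  shows "free_ext scale bul phi (fbul i u v) = bul i (free_ext scale bul phi u) (free_ext scale bul phi v)"
proof -
  define D where "D = (\<lambda>(a, c). bbul i a c) ` (supp u \<times> supp v)"
  have fin: "finite (supp u)" "finite (supp v)" using u v by (simp_all add: FG_iff)
  have KX: "a \<in> KX X dX n" "c \<in> KX X dX m" if "a \<in> supp u" "c \<in> supp v" for a c
    using that u v by (auto simp: FG_iff)
  have u_G: "scale (u a) (eval_basis bul phi a) \<in> G n" if "a \<in> supp u" for a
    using that u phi by (auto simp: FG_iff intro: G_scale eval_basis_in_G)
  have v_G: "scale (v c) (eval_basis bul phi c) \<in> G m" if "c \<in> supp v" for c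
    using that v phi by (auto simp: FG_iff intro: G_scale eval_basis_in_G)
  have "free_ext scale bul phi (fbul i u v) = (\<Sum>e\<in>D. scale (fbul i u v e) (eval_basis bul phi e))"
    using fin supp_fbul[of i u v] by (intro free_ext_eq_sum) (auto simp: D_def)
  also have "\<dots> = (\<Sum>e\<in>D. \<Sum>a\<in>supp u. \<Sum>c\<in>supp v.
      if bbul i a c = e then scale (u a * v c) (eval_basis bul phi e) else 0)"
    using fin by (simp add: fbul_eq_sum scale_sum_left if_distrib[of "\<lambda>t. scale t _"] cong: if_cong)
  also have "\<dots> = (\<Sum>a\<in>supp u. \<Sum>c\<in>supp v. scale (u a * v c) (eval_basis bul phi (bbul i a c)))"
    using fin by (intro sum_if_image_collapse) (auto simp: D_def)
  also have "\<dots> = (\<Sum>a\<in>supp u. \<Sum>c\<in>supp v.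
      bul i (scale (u a) (eval_basis bul phi a)) (scale (v c) (eval_basis bul phi c)))"
    using KX i phi by (intro sum.cong refl scale_eval_basis_bbul)
  also have "\<dots> = bul i (free_ext scale bul phi u) (free_ext scale bul phi v)"
    unfolding free_ext_def by (rule bul_sum_sum[OF u_G v_G i, symmetric])
  finally show ?thesis .
qed

lemma free_ext_gen: "free_ext scale bul phi (gen dX x) = phi x"
  unfolding free_ext_def gen_eq_delta supp_delta by (simp add: delta_def)

lemma free_ext_free_hom:
  assumes "\<forall>x\<in>X. phi x \<in> G (dX x)"
  shows "free_hom X dX scale G bul phi (free_ext scale bul phi)"
  unfolding free_hom_def using assms
  by (simp add: gcarrier_FG_iff free_ext_in_G free_ext_add free_ext_fscale free_ext_fbul free_ext_gen)

end

section \<open>Uniqueness\<close>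

lemma gcarrier_FG_add: "u \<in> gcarrier (FG X dX) \<Longrightarrow> v \<in> gcarrier (FG X dX) \<Longrightarrow> u + v \<in> gcarrier (FG X dX)"
  using supp_add[of u v] by (auto simp: gcarrier_FG_iff intro: finite_subset)

lemma gcarrier_FG_fscale: "u \<in> gcarrier (FG X dX) \<Longrightarrow> fscale c u \<in> gcarrier (FG X dX)"
  using supp_fscale[of c u] by (auto simp: gcarrier_FG_iff intro: finite_subset)

lemma gcarrier_FG_sum:
  "(\<And>b. b \<in> A \<Longrightarrow> w b \<in> gcarrier (FG X dX)) \<Longrightarrow> (\<Sum>b\<in>A. w b) \<in> gcarrier (FG X dX)"
proof (induction A rule: infinite_finite_induct)
  case (insert b A)
  then have "w b \<in> gcarrier (FG X dX)" "sum w A \<in> gcarrier (FG X dX)" by simp_all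
  then have "w b + sum w A \<in> gcarrier (FG X dX)" by (rule gcarrier_FG_add)
  moreover have "sum w (insert b A) = w b + sum w A" using insert.hyps by (rule sum.insert)
  ultimately show ?case by (simp only:)
qed (simp_all add: gcarrier_FG_iff supp_def)

lemma delta_in_gcarrier: "b \<in> KX X dX n \<Longrightarrow> delta b \<in> gcarrier (FG X dX)"
  using KX_length[of b] by (simp add: gcarrier_FG_iff supp_delta)

lemma free_hom_sum:
  assumes hom: "free_hom X dX scale G bul phi Phi"
    and w: "\<And>b. b \<in> A \<Longrightarrow> w b \<in> gcarrier (FG X dX)"
  shows "Phi (\<Sum>b\<in>A. w b) = (\<Sum>b\<in>A. Phi (w b))"
proof -
  have add: "Phi (u + v) = Phi u + Phi v" if "u \<in> gcarrier (FG X dX)" "v \<in> gcarrier (FG X dX)" for u v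
    using hom that unfolding free_hom_def by blast
  have "0 \<in> gcarrier (FG X dX)" by (simp add: gcarrier_FG_iff supp_def)
  from add[OF this this] have "Phi 0 = 0" by simp
  with w show ?thesis
    by (induction A rule: infinite_finite_induct) (simp_all add: add gcarrier_FG_sum)
qed

lemma free_hom_delta:
  fixes Phi :: "(nat list \<times> 'x list \<Rightarrow> 'k::field) \<Rightarrow> 'a::ab_group_add"
  assumes hom: "free_hom X dX scale G bul phi Phi" and b: "b \<in> KX X dX n"
  shows "Phi (delta b) = eval_basis bul phi b"
  using b
proof (induction rule: KX_induct)
  case (generator x)
  then have "Phi (gen dX x) = phi x" using hom unfolding free_hom_def by blast
  then show ?case by (simp add: gen_eq_delta)
next
  case (graft x j f xs n')
  let ?g = "(replicate (dX x) 1, [x])"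
  have g: "delta ?g \<in> FG X dX (dX x)" using graft.hyps(1,2) by (intro delta_FG) (simp add: KX_single)
  have "Phi (delta (bbul j ?g (f, xs))) = Phi (fbul j (delta ?g) (delta (f, xs)))"
    by (simp add: fbul_delta)
  also have "\<dots> = bul j (Phi (delta ?g)) (Phi (delta (f, xs)))"
    using hom g delta_FG[OF graft.hyps(3)] graft.hyps(4) unfolding free_hom_def by blast
  also have "\<dots> = bul j (phi x) (eval_basis bul phi (f, xs))"
    using hom graft.IH graft.hyps(1) unfolding free_hom_def gen_eq_delta by simp
  also have "\<dots> = eval_basis bul phi (bbul j ?g (f, xs))"
    using eval_basis_graft[OF graft.hyps(3,4,2), of bul phi] by simp
  finally show ?case .
qed

lemma free_hom_eq_free_ext:
  fixes Phi :: "(nat list \<times> 'x list \<Rightarrow> 'k::field) \<Rightarrow> 'a::ab_group_add"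
  assumes hom: "free_hom X dX scale G bul phi Phi" and u: "u \<in> gcarrier (FG X dX)"
  shows "Phi u = free_ext scale bul phi u"
proof -
  have fin: "finite (supp u)" and KX: "\<And>b. b \<in> supp u \<Longrightarrow> b \<in> KX X dX (length (fst b))"
    using u by (simp_all add: gcarrier_FG_iff)
  have "(\<Sum>b\<in>supp u. fscale (u b) (delta b)) = u"
    using fin by (simp add: sum_fscale_delta supp_def fun_eq_iff)
  moreover have "Phi (\<Sum>b\<in>supp u. fscale (u b) (delta b)) = (\<Sum>b\<in>supp u. Phi (fscale (u b) (delta b)))"
    using hom KX by (intro free_hom_sum gcarrier_FG_fscale delta_in_gcarrier)
  ultimately have "Phi u = (\<Sum>b\<in>supp u. Phi (fscale (u b) (delta b)))" by simp
  also have "\<dots> = (\<Sum>b\<in>supp u. scale (u b) (eval_basis bul phi b))"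
  proof (intro sum.cong refl)
    fix b assume "b \<in> supp u"
    then have b: "b \<in> KX X dX (length (fst b))" by (rule KX)
    have "delta b \<in> gcarrier (FG X dX)" "Phi (delta b) = eval_basis bul phi b"
      using delta_in_gcarrier[OF b] free_hom_delta[OF hom b] by simp_all
    then show "Phi (fscale (u b) (delta b)) = scale (u b) (eval_basis bul phi b)"
      using hom unfolding free_hom_def by auto
  qed
  finally show ?thesis by (simp add: free_ext_def)
qed

theorem mainTheorem15:
  fixes X :: "'x set" and dX :: "'x \<Rightarrow> nat"
  assumes pos: "\<forall>x\<in>X. 1 \<le> dX x"
  shows "preshuffle_algebra (fscale :: 'k::field \<Rightarrow> _) (FG X dX) fbul \<and>
    (\<forall>(scale :: 'k \<Rightarrow> 'a::ab_group_add \<Rightarrow> 'a) G bul (phi :: 'x \<Rightarrow> 'a).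
       preshuffle_algebra scale G bul \<longrightarrow> (\<forall>x\<in>X. phi x \<in> G (dX x)) \<longrightarrow>
       (\<exists>Phi. free_hom X dX scale G bul phi Phi) \<and>
       (\<forall>Phi Psi. free_hom X dX scale G bul phi Phi \<longrightarrow> free_hom X dX scale G bul phi Psi \<longrightarrow>
          (\<forall>u\<in>gcarrier (FG X dX). Phi u = Psi u)))"
proof (intro conjI allI impI)
  show "preshuffle_algebra (fscale :: 'k \<Rightarrow> _) (FG X dX) fbul"
    by (rule preshuffle_algebra_FG)
next
  fix scale :: "'k \<Rightarrow> 'a \<Rightarrow> 'a" and G bul and phi :: "'x \<Rightarrow> 'a"
  assume "preshuffle_algebra scale G bul" and phi: "\<forall>x\<in>X. phi x \<in> G (dX x)"
  then interpret preshuffle_alg scale G bul by unfold_locales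
  show "\<exists>Phi. free_hom X dX scale G bul phi Phi"
    using free_ext_free_hom[OF phi] by blast
next
  fix scale :: "'k \<Rightarrow> 'a \<Rightarrow> 'a" and G bul and phi :: "'x \<Rightarrow> 'a" and Phi Psi
  assume "free_hom X dX scale G bul phi Phi" "free_hom X dX scale G bul phi Psi"
  then show "\<forall>u\<in>gcarrier (FG X dX). Phi u = Psi u"
    by (simp add: free_hom_eq_free_ext)
qed

end
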